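(* Let $r\ge 2$ be an integer and $0\le x<\pi$ real. Then $$\int_0^x \theta^{r-2}\log\left(\cos\frac\theta2\right)d\theta=\frac{x^{r-1}}{r-1}\log\left(\cos\frac x2\right)-\frac{(2\pi)^{r-1}}{r-1}\log\mathcal C_r\left(\frac x{2\pi}\right).$$
   Context: For an integer $r\ge2$ let $P_r(y)=(1-y)\exp\left(y+\frac{y^2}{2}+\cdots+\frac{y^r}{r}\right)$. The multiple cosine function of Kurokawa–Koyama of order $r\ge2$ is $\mathcal C_r(x)=\prod_{n\ge1,\ n\text{ odd}}\left\{P_r\left(\frac{x}{n/2}\right)P_r\left(-\frac{x}{n/2}\right)^{(-1)^{r-1}}\right\}^{(n/2)^{r-1}}$, interpreted as $\mathcal C_r(x)=\exp\Big(\sum_{n\ge1,\,n\text{ odd}}(n/2)^{r-1}\big[\operatorname{Log}P_r(2x/n)+(-1)^{r-1}\operatorname{Log}P_r(-2x/n)\big]\Big)$, where $\operatorname{Log}P_r(y):=\operatorname{Log}(1-y)+y+\frac{y^2}{2}+\cdots+\frac{y^r}{r}$ with $\operatorname{Log}$ the principal branch. The series converges and defines a holomorphic function on $D=\mathbb C\setminus\big((-\infty,-\tfrac12]\cup[\tfrac12,\infty)\big)$, positive on $(-\tfrac12,\tfrac12)$; $\log\mathcal C_r(x)$ denotes the exponent above (the real logarithm for real $|x|<\tfrac12$). *)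

theory Defs
  imports "HOL-Analysis.Analysis"
begin

definition LogP :: "nat \<Rightarrow> complex \<Rightarrow> complex" where
  "LogP r y = Ln (1 - y) + (\<Sum>k=1..r. y ^ k / of_nat k)"

definition logC :: "nat \<Rightarrow> complex \<Rightarrow> complex" where
  "logC r x = (\<Sum>m. (of_nat (2*m+1) / 2) ^ (r - 1) *
      (LogP r (2 * x / of_nat (2*m+1)) + (-1) ^ (r - 1) * LogP r (- 2 * x / of_nat (2*m+1))))"

end

theory Submission
  imports Defs
begin

text \<open>Termwise differentiation of the series defining \<open>log C\<^sub>r\<close> gives
  \<open>(log C\<^sub>r)'(y) = - \<pi> y\<^sup>r\<^sup>-\<^sup>1 tan (\<pi> y)\<close>, once the partial fraction expansion of \<open>tan\<close>
  is obtained by differentiating the logarithm of the Euler product for \<open>cos (\<pi> y)\<close>.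
  As \<open>(ln cos (\<theta>/2))' = - tan (\<theta>/2) / 2\<close>, the right-hand side of the theorem is then an
  antiderivative of \<open>\<theta>\<^sup>r\<^sup>-\<^sup>2 ln cos (\<theta>/2)\<close> vanishing at \<open>0\<close>, and the fundamental theorem of
  calculus concludes.\<close>

lemma termwise_has_real_derivative_suminf:
  fixes f f' :: "nat \<Rightarrow> real \<Rightarrow> real"
  assumes deriv: "\<And>m y. \<bar>y\<bar> < a \<Longrightarrow> (f m has_real_derivative f' m y) (at y)"
    and bound: "\<And>m y. \<bar>y\<bar> < a \<Longrightarrow> \<bar>f' m y\<bar> \<le> M m" and M: "summable M"
    and f0: "summable (\<lambda>m. f m 0)" and y: "\<bar>y\<bar> < a"
  shows "summable (\<lambda>m. f m y)"
    and "((\<lambda>y. \<Sum>m. f m y) has_real_derivative (\<Sum>m. f' m y)) (at y)"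
proof -
  let ?S = "{-a<..<a}"
  have S: "\<bar>y\<bar> < a \<longleftrightarrow> y \<in> ?S" for y by auto
  have "uniformly_convergent_on ?S (\<lambda>n y. \<Sum>m<n. f' m y)"
    using bound M by (intro Weierstrass_m_test') (auto simp: S)
  moreover have "(f m has_real_derivative f' m z) (at z within ?S)" if "z \<in> ?S" for m z
    using deriv that by (auto intro: has_field_derivative_at_within)
  moreover have "0 \<in> ?S" "y \<in> interior ?S" using y by auto
  ultimately show "summable (\<lambda>m. f m y)"
    and "((\<lambda>y. \<Sum>m. f m y) has_real_derivative (\<Sum>m. f' m y)) (at y)"
    using has_field_derivative_series'[OF convex_real_interval(8)] f0 by blast+
qed

lemma summable_divide_Suc_sq: "summable (\<lambda>m. c / real (Suc m) ^ 2)"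
proof -
  have "summable (\<lambda>m. inverse (real m ^ 2))" using inverse_power_summable[of 2] by simp
  then have "summable (\<lambda>m. inverse (real (Suc m) ^ 2))" by (subst summable_Suc_iff)
  then show ?thesis by (simp add: divide_inverse summable_mult)
qed

lemma four_sq_less_one:
  fixes y :: real assumes "\<bar>y\<bar> < 1/2" shows "4*y^2 < 1"
proof -
  have "(2*y)^2 < 1" using assms by (subst abs_square_less_1) simp
  then show ?thesis by (simp add: power_mult_distrib)
qed

lemma cos_pi_pos:
  fixes y :: real assumes "\<bar>y\<bar> < 1/2" shows "cos (pi*y) > 0"
proof (rule cos_gt_zero_pi)
  have "\<bar>pi*y\<bar> < pi/2" using assms by (simp add: abs_mult)
  then show "- (pi/2) < pi*y" "pi*y < pi/2" by linarith+
qed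

lemma prod_one_minus_sq_even_odd_split:
  fixes y :: real
  shows "(\<Prod>k=1..2*N. 1 - (2*y)^2/(real k)^2) =
     (\<Prod>m<N. 1 - 4*y^2/(real(2*m+1))^2) * (\<Prod>k=1..N. 1 - y^2/(real k)^2)"
proof (induction N)
  case 0 then show ?case by simp
next
  case (Suc N)
  define g where "g k = 1 - (2*y)^2/(real k)^2" for k
  have "2 * Suc N = Suc (Suc (2*N))" by simp
  then have "(\<Prod>k=1..2*Suc N. g k) = (\<Prod>k=1..2*N. g k) * g (2*N+1) * g (Suc N * 2)"
    by (simp add: mult.commute)
  moreover have "g (2*N+1) = 1 - 4*y^2/(real (2*N+1))^2"
    by (simp add: g_def power_mult_distrib)
  moreover have "g (Suc N * 2) = 1 - y^2/(real (Suc N))^2"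
    by (simp only: g_def of_nat_mult power_mult_distrib) simp
  ultimately show ?case
    using Suc.IH by (simp add: g_def mult_ac)
qed

lemma cos_product_formula_real:
  fixes y :: real
  assumes "\<bar>y\<bar> < 1/2"
  shows "(\<lambda>N. \<Prod>m<N. 1 - 4*y^2/(real(2*m+1))^2) \<longlonglongrightarrow> cos (pi*y)"
proof (cases "y = 0")
  case True then show ?thesis by simp
next
  case False
  txt \<open>\<open>cos (\<pi> y) = sin (2\<pi> y) / (2 sin (\<pi> y))\<close>: divide the sine product at \<open>2y\<close>, truncated
    after \<open>2N\<close> factors, by the one at \<open>y\<close>.\<close>
  define P where "P z N = (\<Prod>k=1..N. 1 - z^2/(real k)^2)" for z :: real and N
  have "P y N \<noteq> 0" for N
  proof -
    have "y^2/(real k)^2 < 1" if "1 \<le> k" for k :: nat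
    proof -
      have k: "real k \<ge> 1" using that by simp
      then have "y^2 < (real k)^2"
        using four_sq_less_one[OF assms] zero_le_power2[of y] one_le_power[OF k, of 2] by linarith
      then show ?thesis using k by (simp add: field_simps)
    qed
    then show ?thesis unfolding P_def by (subst prod_zero_iff) fastforce+
  qed
  have sin_nz: "sin (pi*y) \<noteq> 0"
  proof
    assume "sin (pi*y) = 0"
    then obtain n :: int where "y = of_int n" using sin_zero_iff_int2 by auto
    with assms False show False by (cases n rule: int_cases3) auto
  qed
  have "(\<lambda>N. P (2*y) (N*2) / P y N) \<longlonglongrightarrow> (sin (pi*(2*y))/(pi*(2*y))) / (sin (pi*y)/(pi*y))"
    unfolding P_def using False sin_nz
    by (intro tendsto_divide LIMSEQ_linear[OF sin_product_formula_real'] sin_product_formula_real') auto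
  also have "(sin (pi*(2*y))/(pi*(2*y))) / (sin (pi*y)/(pi*y)) = cos (pi*y)"
    using False sin_nz sin_double[of "pi*y"] by (simp add: field_simps)
  also have "(\<lambda>N. P (2*y) (N*2) / P y N) = (\<lambda>N. \<Prod>m<N. 1 - 4*y^2/(real(2*m+1))^2)"
  proof
    fix N
    have "P (2*y) (N*2) = (\<Prod>m<N. 1 - 4*y^2/(real(2*m+1))^2) * P y N"
      unfolding P_def by (subst mult.commute) (rule prod_one_minus_sq_even_odd_split)
    then show "P (2*y) (N*2) / P y N = (\<Prod>m<N. 1 - 4*y^2/(real(2*m+1))^2)"
      using \<open>P y N \<noteq> 0\<close> by simp
  qed
  finally show ?thesis .
qed

lemma ln_cos_pi_sums:
  fixes y :: real
  assumes "\<bar>y\<bar> < 1/2"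
  shows "(\<lambda>m. ln (1 - 4*y^2/(real(2*m+1))^2)) sums ln (cos (pi*y))"
proof -
  have pos: "1 - 4*y^2/(real(2*m+1))^2 > 0" for m
  proof -
    have "4*y^2 < 1" using four_sq_less_one[OF assms] .
    also have "1 \<le> (real(2*m+1))^2" by simp
    finally show ?thesis by (simp add: field_simps)
  qed
  have "(\<lambda>N. ln (\<Prod>m<N. 1 - 4*y^2/(real(2*m+1))^2)) \<longlonglongrightarrow> ln (cos (pi*y))"
    using cos_pi_pos[OF assms] by (intro tendsto_ln cos_product_formula_real assms) simp
  moreover have "ln (\<Prod>m<N. 1 - 4*y^2/(real(2*m+1))^2) = (\<Sum>m<N. ln (1 - 4*y^2/(real(2*m+1))^2))" for N
    using pos by (intro ln_prod) (auto simp: less_imp_neq[symmetric])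
  ultimately show ?thesis unfolding sums_def by simp
qed

lemma abs_tan_partial_fraction_term_le:
  fixes a y :: real
  assumes a: "a < 1/2" and y: "\<bar>y\<bar> \<le> a"
  shows "\<bar>8*y/((real(2*m+1))^2 - 4*y^2)\<bar> \<le> 8*a/(1 - 4*a^2) / real (Suc m) ^ 2"
proof -
  define n where "n = real(2*m+1)"
  have "real (Suc m) \<le> n" "1 \<le> n" by (simp_all add: n_def)
  then have n: "real (Suc m) ^ 2 \<le> n^2" "1 \<le> n^2"
    by (auto intro: power_mono one_le_power)
  have "y^2 \<le> a^2" using y by (metis abs_le_square_iff abs_of_nonneg abs_ge_zero order_trans)
  have a2: "4*a^2 < 1" using a y by (intro four_sq_less_one) auto
  have "real (Suc m) ^ 2 * (1 - 4*a^2) \<le> n^2 * (1 - 4*a^2)"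
    using n(1) a2 by (intro mult_right_mono) auto
  also have "\<dots> = n^2 - 4*(a^2*n^2)" by (simp add: algebra_simps)
  also have "\<dots> \<le> n^2 - 4*y^2"
    using mult_left_mono[OF n(2), of "a^2"] \<open>y^2 \<le> a^2\<close> by simp
  finally have den: "real (Suc m) ^ 2 * (1 - 4*a^2) \<le> n^2 - 4*y^2" .
  moreover have "0 < real (Suc m) ^ 2 * (1 - 4*a^2)" using a2 by simp
  ultimately have "\<bar>8*y/(n^2 - 4*y^2)\<bar> = 8*\<bar>y\<bar> / (n^2 - 4*y^2)"
    by (simp add: abs_div abs_mult)
  also have "\<dots> \<le> 8*a / (real (Suc m) ^ 2 * (1 - 4*a^2))"
    using den a2 y by (intro frac_le) auto
  finally show ?thesis by (simp add: n_def field_simps)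
qed

lemma has_real_derivative_ln_one_minus_sq:
  fixes n y :: real
  assumes n: "n > 0" and y: "4*y^2 < n^2"
  shows "((\<lambda>y. ln (1 - 4*y^2/n^2)) has_real_derivative - (8*y/(n^2 - 4*y^2))) (at y)"
proof -
  have pos: "0 < 1 - 4*y^2/n^2" using n y by (simp add: field_simps)
  have "((\<lambda>y. 1 - 4*y^2/n^2) has_real_derivative -(8*y)/n^2) (at y)"
    using n by (auto intro!: derivative_eq_intros simp: field_simps eval_nat_numeral)
  from DERIV_chain2[OF DERIV_ln_divide[OF pos] this]
  have "((\<lambda>y. ln (1 - 4*y^2/n^2)) has_real_derivative (1/(1 - 4*y^2/n^2)) * (-(8*y)/n^2)) (at y)" .
  also have "(1/(1 - 4*y^2/n^2)) * (-(8*y)/n^2) = - (8*y/(n^2 - 4*y^2))"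
    using pos n y by (simp add: field_simps)
  finally show ?thesis .
qed

lemma tan_partial_fraction_sums:
  fixes y :: real
  assumes y: "\<bar>y\<bar> < 1/2"
  shows "(\<lambda>m. 8*y/((real(2*m+1))^2 - 4*y^2)) sums (pi * tan (pi*y))"
proof -
  define a where "a = (\<bar>y\<bar> + 1/2)/2"
  have a: "\<bar>y\<bar> < a" "a < 1/2" unfolding a_def using y by auto
  let ?f = "\<lambda>m y. ln (1 - 4*y^2/(real(2*m+1))^2)"
  let ?f' = "\<lambda>m y. - (8*y/((real(2*m+1))^2 - 4*y^2))"
  let ?M = "\<lambda>m. 8*a/(1 - 4*a^2) / real (Suc m) ^ 2"
  have f': "(?f m has_real_derivative ?f' m z) (at z)" if "\<bar>z\<bar> < a" for m z
  proof (rule has_real_derivative_ln_one_minus_sq)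
    have "4*z^2 < 1" using that a by (intro four_sq_less_one) auto
    also have "1 \<le> (real(2*m+1))^2" by simp
    finally show "4*z^2 < (real(2*m+1))^2" .
  qed simp
  have M: "\<bar>?f' m z\<bar> \<le> ?M m" if "\<bar>z\<bar> < a" for m z
    using abs_tan_partial_fraction_term_le[OF a(2), of z m] that by simp
  have "summable (\<lambda>m. ?f m 0)" by simp
  then have series: "((\<lambda>y. \<Sum>m. ?f m y) has_real_derivative (\<Sum>m. ?f' m y)) (at y)"
    using termwise_has_real_derivative_suminf(2)[where f = ?f and f' = ?f' and M = ?M]
      f' M summable_divide_Suc_sq a(1) by blast
  have "(\<Sum>m. ?f m z) = ln (cos (pi*z))" if "z \<in> {-1/2<..<1/2}" for z
    using that by (intro sums_unique[symmetric] ln_cos_pi_sums) auto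
  then have "((\<lambda>y. ln (cos (pi*y))) has_real_derivative (\<Sum>m. ?f' m y)) (at y)"
    using y
    by (intro has_field_derivative_transform_within_open[OF series open_greaterThanLessThan[of "-1/2" "1/2"]])
       auto
  moreover have "((\<lambda>y. ln (cos (pi*y))) has_real_derivative - (pi * tan (pi*y))) (at y)"
    using cos_pi_pos[OF y] by (auto intro!: derivative_eq_intros simp: tan_def field_simps)
  ultimately have "(\<Sum>m. ?f' m y) = - (pi * tan (pi*y))"
    by (rule DERIV_unique)
  moreover have "summable (\<lambda>m. ?f' m y)"
    using M[OF a(1)]
    by (intro summable_comparison_test'[OF summable_divide_Suc_sq[of "8*a/(1 - 4*a^2)"], of 0])
       simp
  ultimately have "(\<lambda>m. ?f' m y) sums - (pi * tan (pi*y))"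
    by (metis summable_sums)
  from sums_minus[OF this] show ?thesis by simp
qed

definition LogP_real :: "nat \<Rightarrow> real \<Rightarrow> real" where
  "LogP_real r u = ln (1 - u) + (\<Sum>k=1..r. u ^ k / real k)"

lemma LogP_real_zero [simp]: "LogP_real r 0 = 0"
  unfolding LogP_real_def by (simp add: sum.neutral)

lemma LogP_of_real:
  assumes "u < 1"
  shows "LogP r (complex_of_real u) = complex_of_real (LogP_real r u)"
proof -
  have "Ln (1 - complex_of_real u) = complex_of_real (ln (1 - u))"
    using Ln_of_real[of "1 - u"] assms by simp
  then show ?thesis by (simp add: LogP_def LogP_real_def)
qed

lemma has_real_derivative_LogP_real:
  assumes "u < 1"
  shows "(LogP_real r has_real_derivative - (u^r / (1 - u))) (at u)"
proof -
  have "(LogP_real r has_real_derivative - 1/(1 - u) + (\<Sum>k=1..r. real k * u^(k-1) / real k)) (at u)"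
    unfolding LogP_real_def using assms by (auto intro!: derivative_eq_intros simp: field_simps)
  also have "(\<Sum>k=1..r. real k * u^(k-1) / real k) = (\<Sum>i<r. u^i)"
    by (induction r) (simp_all add: sum.nat_ivl_Suc')
  also have "- 1/(1 - u) + (\<Sum>i<r. u^i) = - (u^r / (1 - u))"
    using one_diff_power_eq[of u r] assms by (simp add: field_simps)
  finally show ?thesis .
qed

definition logC_term :: "nat \<Rightarrow> real \<Rightarrow> real \<Rightarrow> real" where
  "logC_term r n y = (n/2)^(r-1) * (LogP_real r (2*y/n) + (-1)^(r-1) * LogP_real r (- 2*y/n))"

lemma has_real_derivative_logC_term:
  fixes n y :: real
  assumes n: "n > 0" and y: "\<bar>y\<bar> < n/2" and r: "r \<ge> 1"
  shows "(logC_term r n has_real_derivative - (y^(r-1) * (8*y/(n^2 - 4*y^2)))) (at y)"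
proof -
  define k where "k = r - 1"
  define w where "w = 2*y/n"
  have r_eq: "r = Suc k" using r by (simp add: k_def)
  have w: "w < 1" "- w < 1" and w_neg: "- 2*y/n = - w"
    using n y by (auto simp: w_def field_simps abs_less_iff)
  have "((\<lambda>y. LogP_real r (2*y/n)) has_real_derivative - (w^r/(1 - w)) * (2/n)) (at y)"
    unfolding w_def using w(1) n
    by (intro DERIV_chain2[OF has_real_derivative_LogP_real])
       (auto simp: w_def intro!: derivative_eq_intros)
  moreover have "((\<lambda>y. LogP_real r (- 2*y/n)) has_real_derivative
      - ((-w)^r/(1 - - w)) * (- 2/n)) (at y)"
    unfolding w_neg[symmetric] using w(2) n
    by (intro DERIV_chain2[OF has_real_derivative_LogP_real])
       (auto simp: w_def intro!: derivative_eq_intros)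
  ultimately have "(logC_term r n has_real_derivative
      (n/2)^k * (- (w^r/(1 - w)) * (2/n) + (-1)^k * (- ((-w)^r/(1 - - w)) * (- 2/n)))) (at y)"
    unfolding logC_term_def k_def[symmetric] by (intro DERIV_cmult DERIV_add)
  also have "(-1)^k * (- ((-w)^r/(1 - - w)) * (- 2/n)) = ((- 1)^k * (- w)^r) / (1 + w) * (2/n)"
    by simp
  also have "(- 1) ^ k * (- w) ^ r = - (w ^ r)"
    using power_mult_distrib[of "- 1" "- w" k] by (simp add: r_eq)
  also have "(n/2)^k * (- (w^r/(1 - w)) * (2/n) + - (w^r) / (1 + w) * (2/n))
      = - (((n/2)^k * w^k) * (w * (2/n) * (1/(1 - w) + 1/(1 + w))))"
    by (simp add: r_eq ring_distribs mult_ac)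
  also have "(n/2)^k * w^k = y^(r-1)"
    using n by (simp add: k_def w_def power_mult_distrib[symmetric])
  also have "w * (2/n) * (1/(1 - w) + 1/(1 + w)) = 8*y/(n^2 - 4*y^2)"
    using w n by (simp add: w_def field_simps power2_eq_square)
  finally show ?thesis .
qed

definition logC_real :: "nat \<Rightarrow> real \<Rightarrow> real" where
  "logC_real r y = (\<Sum>m. logC_term r (real (2*m+1)) y)"

lemma logC_real_zero [simp]: "logC_real r 0 = 0"
  by (simp add: logC_real_def logC_term_def)

lemma
  fixes y :: real
  assumes y: "\<bar>y\<bar> < 1/2" and r: "r \<ge> 1"
  shows summable_logC_term: "summable (\<lambda>m. logC_term r (real (2*m+1)) y)"
    and has_real_derivative_logC_real:
      "(logC_real r has_real_derivative - (pi * y^(r-1) * tan (pi*y))) (at y)"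
proof -
  define a where "a = (\<bar>y\<bar> + 1/2)/2"
  have a: "\<bar>y\<bar> < a" "a < 1/2" unfolding a_def using y by auto
  let ?f = "\<lambda>m. logC_term r (real (2*m+1))"
  let ?f' = "\<lambda>m z. - (z^(r-1) * (8*z/((real(2*m+1))^2 - 4*z^2)))"
  let ?M = "\<lambda>m. a^(r-1) * (8*a/(1 - 4*a^2)) / real (Suc m) ^ 2"
  have f': "(?f m has_real_derivative ?f' m z) (at z)" if "\<bar>z\<bar> < a" for m z
    using that a by (intro has_real_derivative_logC_term r) auto
  have M: "\<bar>?f' m z\<bar> \<le> ?M m" if "\<bar>z\<bar> < a" for m z
  proof -
    have "\<bar>?f' m z\<bar> = \<bar>z^(r-1)\<bar> * \<bar>8*z/((real(2*m+1))^2 - 4*z^2)\<bar>"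
      by (simp only: abs_minus_cancel abs_mult)
    also have "\<dots> \<le> a^(r-1) * (8*a/(1 - 4*a^2) / real (Suc m) ^ 2)"
      using that abs_tan_partial_fraction_term_le[OF a(2), of z m]
      by (intro mult_mono) (auto simp: power_abs power_mono)
    finally show ?thesis by simp
  qed
  have "summable (\<lambda>m. ?f m 0)" by (simp add: logC_term_def)
  note termwise = termwise_has_real_derivative_suminf[where f = ?f and f' = ?f' and M = ?M,
      OF f' M summable_divide_Suc_sq this a(1)]
  show "summable (\<lambda>m. logC_term r (real (2*m+1)) y)" by (rule termwise(1))
  have "(\<lambda>m. ?f' m y) sums - (y^(r-1) * (pi * tan (pi*y)))"
    by (intro sums_minus sums_mult tan_partial_fraction_sums y)
  then have "(\<Sum>m. ?f' m y) = - (pi * y^(r-1) * tan (pi*y))"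
    by (simp add: sums_iff)
  with termwise(2) show "(logC_real r has_real_derivative - (pi * y^(r-1) * tan (pi*y))) (at y)"
    unfolding logC_real_def[abs_def] by simp
qed

lemma logC_of_real:
  assumes y: "\<bar>y\<bar> < 1/2" and r: "r \<ge> 1"
  shows "logC r (complex_of_real y) = complex_of_real (logC_real r y)"
proof -
  have "(of_nat (2*m+1) / 2) ^ (r - 1) * (LogP r (2 * complex_of_real y / of_nat (2*m+1))
      + (-1) ^ (r - 1) * LogP r (- 2 * complex_of_real y / of_nat (2*m+1)))
    = complex_of_real (logC_term r (real (2*m+1)) y)" for m
  proof -
    have "\<bar>2*y/real (2*m+1)\<bar> < 1"
      using y by (simp add: abs_divide divide_less_eq)
    moreover have "- 2*y/real (2*m+1) = - (2*y/real (2*m+1))" by simp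
    ultimately have u: "2*y/real (2*m+1) < 1" "- 2*y/real (2*m+1) < 1"
      unfolding abs_less_iff by linarith+
    have of_real_args: "2 * complex_of_real y / of_nat (2*m+1) = complex_of_real (2*y/real (2*m+1))"
      "- 2 * complex_of_real y / of_nat (2*m+1) = complex_of_real (- 2*y/real (2*m+1))"
      by simp_all
    show ?thesis
      unfolding of_real_args LogP_of_real[OF u(1)] LogP_of_real[OF u(2)] logC_term_def by simp
  qed
  then show ?thesis
    unfolding logC_def logC_real_def suminf_of_real[OF summable_logC_term[OF y r]] by simp
qed

lemma has_real_derivative_ln_cos_antiderivative:
  fixes t :: real
  assumes r: "r \<ge> 2" and t: "\<bar>t\<bar> < pi"
  shows "((\<lambda>t. t^(r-1) / real (r-1) * ln (cos (t/2))
            - (2*pi)^(r-1) / real (r-1) * logC_real r (t/(2*pi)))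
         has_real_derivative t^(r-2) * ln (cos (t/2))) (at t)"
proof -
  define y where "y = t/(2*pi)"
  have y: "\<bar>y\<bar> < 1/2" using t by (simp add: y_def abs_divide field_simps)
  have pi_y: "pi*y = t/2" by (simp add: y_def)
  have cos: "cos (t/2) > 0" using cos_pi_pos[OF y] by (simp add: pi_y)
  have r1: "r - 1 = Suc (r - 2)" using r by simp
  have "((\<lambda>t. t^(r-1) / real (r-1)) has_real_derivative t^(r-2)) (at t)"
    using r by (auto intro!: derivative_eq_intros simp: r1 numeral_2_eq_2 simp del: of_nat_Suc)
  moreover have "((\<lambda>t. ln (cos (t/2))) has_real_derivative - (tan (t/2) / 2)) (at t)"
    using cos by (auto intro!: derivative_eq_intros simp: tan_def field_simps)
  moreover have "((\<lambda>t. logC_real r (t/(2*pi))) has_real_derivative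
      - (pi * y^(r-1) * tan (pi*y)) * (1/(2*pi))) (at t)"
    unfolding y_def using r t
    by (intro DERIV_chain2[OF has_real_derivative_logC_real])
       (auto intro!: derivative_eq_intros simp: y[unfolded y_def])
  ultimately have "((\<lambda>t. t^(r-1) / real (r-1) * ln (cos (t/2))
            - (2*pi)^(r-1) / real (r-1) * logC_real r (t/(2*pi))) has_real_derivative
      t^(r-2) * ln (cos (t/2)) + - (tan (t/2) / 2) * (t^(r-1) / real (r-1))
        - (2*pi)^(r-1) / real (r-1) * (- (pi * y^(r-1) * tan (pi*y)) * (1/(2*pi)))) (at t)"
    by (intro DERIV_diff DERIV_mult DERIV_cmult)
  also have "(2*pi)^(r-1) / real (r-1) * (- (pi * y^(r-1) * tan (pi*y)) * (1/(2*pi)))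
      = - (tan (t/2) / 2) * (((2*pi)^(r-1) * y^(r-1)) / real (r-1))"
  proof -
    have "P / R * (- (pi * Y * T) * (1/(2*pi))) = - (T/2) * (P * Y / R)" for P R Y T :: real
      by (simp add: field_simps)
    then show ?thesis by (simp only: pi_y)
  qed
  also have "(2*pi)^(r-1) * y^(r-1) = t^(r-1)"
    by (simp add: y_def power_divide)
  finally show ?thesis by simp
qed

theorem theorem2p1:
  fixes r :: nat and x :: real
  assumes "r \<ge> 2" and "0 \<le> x" and "x < pi"
  shows "complex_of_real (integral {0..x} (\<lambda>\<theta>. \<theta> ^ (r - 2) * ln (cos (\<theta> / 2))))
    = complex_of_real (x ^ (r - 1) / real (r - 1) * ln (cos (x / 2)))
      - complex_of_real ((2 * pi) ^ (r - 1) / real (r - 1)) * logC r (complex_of_real (x / (2 * pi)))"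
proof -
  define F where "F t = t^(r-1) / real (r-1) * ln (cos (t/2))
      - (2*pi)^(r-1) / real (r-1) * logC_real r (t/(2*pi))" for t
  have "((\<lambda>\<theta>. \<theta> ^ (r - 2) * ln (cos (\<theta> / 2))) has_integral F x - F 0) {0..x}"
  proof (rule fundamental_theorem_of_calculus[OF \<open>0 \<le> x\<close>])
    fix t assume "t \<in> {0..x}"
    then have "\<bar>t\<bar> < pi" using assms by auto
    from has_real_derivative_ln_cos_antiderivative[OF \<open>r \<ge> 2\<close> this]
    show "(F has_vector_derivative t ^ (r - 2) * ln (cos (t / 2))) (at t within {0..x})"
      unfolding F_def[abs_def] has_real_derivative_iff_has_vector_derivative[symmetric]
      by (rule has_field_derivative_at_within)
  qed
  moreover have "F 0 = 0" using assms by (simp add: F_def)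
  moreover have "logC r (complex_of_real (x/(2*pi))) = complex_of_real (logC_real r (x/(2*pi)))"
    using assms by (intro logC_of_real) (auto simp: field_simps)
  ultimately show ?thesis by (simp add: F_def integral_unique)
qed

end
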